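(* Let $(X,d,\mu)$ be as in the context, $1\le p<\infty$, $x\in X$, assume $\mu$ is doubling at $x$, and fix $0<R_0<\infty$. (i) If $0<q\in\underline{S}_0(x)$, then for $0<2r\le R\le R_0$: $\operatorname{cap}_p(B_r,B_R)\lesssim R^{q-p}$ if $q<p$, and $\operatorname{cap}_p(B_r,B_R)\lesssim r^{q-p}$ if $q>p$. (ii) If $X$ is unbounded and $0<q\in\overline{S}_\infty$, then the same two estimates hold for $R_0\le r\le R/2<\infty$. (iii) If $p\in\underline{S}_0(x)$, then $\operatorname{cap}_p(B_r,B_R)\lesssim\big(\log\frac Rr\big)^{1-p}$ for $0<2r\le R\le R_0$. (iv) If $X$ is unbounded and $p\in\overline{S}_\infty$, then the estimate in (iii) holds for $R_0\le r\le R/2<\infty$. Implicit constants are independent of $r,R$ (but may depend on $R_0$).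
   Context: $(X,d,\mu)$ metric space with positive complete Borel measure, $0<\mu(B)<\infty$ for all balls; $B_r=B(x,r)$. Doubling at $x$: $\mu(B(x,2r))\le C\mu(B(x,r))$ for all $r>0$. $\operatorname{cap}_p(E,\Omega)=\inf\{\int_\Omega g_u^p\,d\mu:u\in N^{1,p}_0(\Omega),u\ge1\text{ on }E\}$ with $N^{1,p}_0(\Omega)=\{f|_\Omega:f\in N^{1,p}(X),f=0 \text{ off }\Omega\}$, $N^{1,p}$ the Newtonian space defined via upper gradients and $g_u$ the minimal $p$-weak upper gradient. $\underline{S}_0(x)=\{q>0:\exists C_q,\ \mu(B_r)\le C_qr^q\text{ for }0<r\le1\}$; $\overline{S}_\infty=\overline{S}_\infty(x)=\{q>0:\exists C_q,\ \mu(B_r)\le C_qr^q\text{ for }r\ge1\}$ (independent of $x$). *)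

theory Defs
  imports "HOL-Analysis.Analysis"
begin

definition mms :: "'a::metric_space measure \<Rightarrow> bool" where
  "mms \<mu> \<longleftrightarrow> space \<mu> = UNIV \<and> sets borel \<subseteq> sets \<mu> \<and> complete_measure \<mu> \<and>
     (\<forall>x r. 0 < r \<longrightarrow> 0 < emeasure \<mu> (ball x r) \<and> emeasure \<mu> (ball x r) < \<infinity>)"

definition epow :: "ennreal \<Rightarrow> real \<Rightarrow> ennreal" where
  "epow a p = (if a = top then top else ennreal (enn2real a powr p))"

definition curve_variation :: "(real \<Rightarrow> 'a::metric_space) \<Rightarrow> real \<Rightarrow> real \<Rightarrow> ennreal" where
  "curve_variation \<gamma> a b =
     (SUP ts \<in> {ts. sorted ts \<and> set ts \<subseteq> {a..b}}.
        ennreal (\<Sum>i<length ts - 1. dist (\<gamma> (ts ! i)) (\<gamma> (ts ! Suc i))))"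

definition arclength_curve :: "(real \<Rightarrow> 'a::metric_space) \<Rightarrow> real \<Rightarrow> bool" where
  "arclength_curve \<gamma> l \<longleftrightarrow> 0 \<le> l \<and>
     (\<forall>s t. 0 \<le> s \<longrightarrow> s \<le> t \<longrightarrow> t \<le> l \<longrightarrow> curve_variation \<gamma> s t = ennreal (t - s))"

definition line_integral :: "('a \<Rightarrow> ennreal) \<Rightarrow> (real \<Rightarrow> 'a) \<Rightarrow> real \<Rightarrow> ennreal" where
  "line_integral g \<gamma> l = (\<integral>\<^sup>+ t. g (\<gamma> t) * indicator {0..l} t \<partial>lborel)"

definition modulus :: "'a::metric_space measure \<Rightarrow> real \<Rightarrow> ((real \<Rightarrow> 'a) \<times> real) set \<Rightarrow> ennreal" where
  "modulus \<mu> p \<Gamma> = (INF \<rho> \<in> {\<rho>. \<rho> \<in> borel_measurable borel \<and>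
        (\<forall>(\<gamma>, l) \<in> \<Gamma>. 1 \<le> line_integral \<rho> \<gamma> l)}. \<integral>\<^sup>+ x. epow (\<rho> x) p \<partial>\<mu>)"

definition p_weak_upper_gradient ::
  "'a::metric_space measure \<Rightarrow> real \<Rightarrow> ('a \<Rightarrow> real) \<Rightarrow> ('a \<Rightarrow> ennreal) \<Rightarrow> bool" where
  "p_weak_upper_gradient \<mu> p u g \<longleftrightarrow> g \<in> borel_measurable borel \<and>
     modulus \<mu> p {(\<gamma>, l). arclength_curve \<gamma> l \<and>
        \<not> ennreal \<bar>u (\<gamma> 0) - u (\<gamma> l)\<bar> \<le> line_integral g \<gamma> l} = 0"

definition newtonian :: "'a::metric_space measure \<Rightarrow> real \<Rightarrow> ('a \<Rightarrow> real) \<Rightarrow> bool" where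
  "newtonian \<mu> p u \<longleftrightarrow> u \<in> borel_measurable \<mu> \<and>
     (\<integral>\<^sup>+ x. ennreal (\<bar>u x\<bar> powr p) \<partial>\<mu>) < \<infinity> \<and>
     (\<exists>g. p_weak_upper_gradient \<mu> p u g \<and> (\<integral>\<^sup>+ x. epow (g x) p \<partial>\<mu>) < \<infinity>)"

text \<open>Functions u in N^{1,p}_0(Omega) are
  represented by their extensions in N^{1,p}(X) vanishing off Omega; the integral of
  g_u^p over Omega equals the infimum over p-weak upper gradients g of u.\<close>
definition cap :: "'a::metric_space measure \<Rightarrow> real \<Rightarrow> 'a set \<Rightarrow> 'a set \<Rightarrow> ennreal" where
  "cap \<mu> p E \<Omega> = (INF ug \<in> {(u, g). newtonian \<mu> p u \<and> (\<forall>y. y \<notin> \<Omega> \<longrightarrow> u y = 0) \<and>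
        (\<forall>y\<in>E. 1 \<le> u y) \<and> p_weak_upper_gradient \<mu> p u g}.
      \<integral>\<^sup>+ y. epow (snd ug y) p * indicator \<Omega> y \<partial>\<mu>)"

definition doubling_at :: "'a::metric_space measure \<Rightarrow> 'a \<Rightarrow> bool" where
  "doubling_at \<mu> x \<longleftrightarrow> (\<exists>C. \<forall>r>0. measure \<mu> (ball x (2 * r)) \<le> C * measure \<mu> (ball x r))"

definition lower_S0 :: "'a::metric_space measure \<Rightarrow> 'a \<Rightarrow> real set" where
  "lower_S0 \<mu> x = {q. 0 < q \<and> (\<exists>C. \<forall>r. 0 < r \<and> r \<le> 1 \<longrightarrow> measure \<mu> (ball x r) \<le> C * r powr q)}"

definition upper_Sinf :: "'a::metric_space measure \<Rightarrow> 'a \<Rightarrow> real set" where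
  "upper_Sinf \<mu> x = {q. 0 < q \<and> (\<exists>C. \<forall>r. 1 \<le> r \<longrightarrow> measure \<mu> (ball x r) \<le> C * r powr q)}"

end

theory Submission
  imports Defs
begin

(* The capacity is bounded by the energy of radial test functions built from cutoffs that fall
   linearly from 1 to 0 across an annulus of width b. Along an arc-length curve such a cutoff
   can only change while the curve is inside the outer ball, at rate at most 1/b, so
   (1/b) times the indicator of the outer ball is an upper gradient. A single cutoff across
   the annulus between r and R (width at least R/2), resp. between r and 2r, gives
   cap <= 2^p R^-p mu(B_R), resp. r^-p mu(B_2r), and the growth mu(B_s) <= C s^q turns these
   into the power bounds. For q = p one averages the n ~ log2 (R/r) cutoffs across the dyadic
   annuli between 2^j r and 2^(j+1) r: their gradients 1/(n 2^j r) sum geometrically, so each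
   annulus contributes at most C (4/n)^p and the energy is at most C 4^p n^(1-p), which is
   of order log (R/r)^(1-p). *)

lemma lipschitz_dist_le_measure_outside_level_set:
  fixes f :: "real \<Rightarrow> 'a::metric_space"
  assumes f: "L-lipschitz_on {0..l} f" and "0 \<le> l"
    and T: "closed T" "T \<subseteq> {0..l}" and f_T: "\<And>t. t \<in> T \<Longrightarrow> f t = c"
  shows "dist (f 0) (f l) \<le> L * measure lborel ({0..l} - T)"
proof (cases "T = {}")
  case True
  have "dist (f 0) (f l) \<le> L * dist 0 l"
    using f \<open>0 \<le> l\<close> by (intro lipschitz_onD) auto
  with True \<open>0 \<le> l\<close> show ?thesis by (simp add: dist_real_def)
next
  case False
  have L: "0 \<le> L" using f by (rule lipschitz_on_nonneg)
  have bdd: "bdd_below T" "bdd_above T" using T(2) by (auto intro: bdd_below_mono bdd_above_mono)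
  define t\<^sub>1 where "t\<^sub>1 = Inf T"
  define t\<^sub>2 where "t\<^sub>2 = Sup T"
  have t\<^sub>1: "t\<^sub>1 \<in> T" unfolding t\<^sub>1_def using False bdd(1) T(1) by (rule closed_contains_Inf)
  have t\<^sub>2: "t\<^sub>2 \<in> T" unfolding t\<^sub>2_def using False bdd(2) T(1) by (rule closed_contains_Sup)
  have "0 \<le> t\<^sub>1" "t\<^sub>2 \<le> l" using T(2) t\<^sub>1 t\<^sub>2 by auto
  have "t\<^sub>1 \<le> t\<^sub>2" unfolding t\<^sub>1_def using t\<^sub>2 bdd(1) by (rule cInf_lower)
  have "t \<notin> T" if "t < t\<^sub>1" for t
    using that cInf_lower[OF _ bdd(1), of t] unfolding t\<^sub>1_def by auto
  moreover have "t \<notin> T" if "t\<^sub>2 < t" for t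
    using that cSup_upper[OF _ bdd(2), of t] unfolding t\<^sub>2_def by auto
  ultimately have outside: "{0..<t\<^sub>1} \<union> {t\<^sub>2<..l} \<subseteq> {0..l} - T"
    using \<open>0 \<le> t\<^sub>1\<close> \<open>t\<^sub>1 \<le> t\<^sub>2\<close> \<open>t\<^sub>2 \<le> l\<close> by auto
  have "dist (f 0) (f l) \<le> dist (f 0) (f t\<^sub>1) + dist (f t\<^sub>2) (f l)"
    using dist_triangle[of "f 0" "f l" "f t\<^sub>2"] f_T[OF t\<^sub>1] f_T[OF t\<^sub>2] by simp
  also have "\<dots> \<le> L * dist 0 t\<^sub>1 + L * dist t\<^sub>2 l"
    using \<open>0 \<le> t\<^sub>1\<close> \<open>t\<^sub>1 \<le> t\<^sub>2\<close> \<open>t\<^sub>2 \<le> l\<close>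
    by (intro add_mono lipschitz_onD[OF f]) auto
  also have "\<dots> = L * measure lborel ({0..<t\<^sub>1} \<union> {t\<^sub>2<..l})"
    using \<open>0 \<le> t\<^sub>1\<close> \<open>t\<^sub>1 \<le> t\<^sub>2\<close> \<open>t\<^sub>2 \<le> l\<close>
    by (subst measure_Union) (auto simp: dist_real_def distrib_left)
  also have "\<dots> \<le> L * measure lborel ({0..l} - T)"
  proof (intro mult_left_mono L measure_mono_fmeasurable)
    have "{0..l} - T \<in> sets lborel" using T(1) by (intro sets.Diff) auto
    then show "{0..l} - T \<in> fmeasurable lborel"
      using fmeasurable_cbox[of 0 l] by (intro fmeasurableI2[of "{0..l}", OF _ Diff_subset]) auto
  qed (use outside in auto)
  finally show ?thesis .
qed

lemma arclength_curve_lipschitz: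
  assumes "arclength_curve \<gamma> l"
  shows "1-lipschitz_on {0..l} \<gamma>"
proof -
  have dist_le: "dist (\<gamma> s) (\<gamma> t) \<le> t - s" if "0 \<le> s" "s \<le> t" "t \<le> l" for s t
  proof -
    have "ennreal (dist (\<gamma> s) (\<gamma> t)) \<le> curve_variation \<gamma> s t"
      unfolding curve_variation_def using that
      by (intro SUP_upper2[where i="[s, t]"]) auto
    also have "\<dots> = ennreal (t - s)" using assms that unfolding arclength_curve_def by auto
    finally show ?thesis using that by (simp add: ennreal_le_iff)
  qed
  show ?thesis
  proof (rule lipschitz_onI)
    fix s t assume "s \<in> {0..l}" "t \<in> {0..l}"
    then show "dist (\<gamma> s) (\<gamma> t) \<le> 1 * dist s t"
      using dist_le[of s t] dist_le[of t s] by (cases "s \<le> t") (auto simp: dist_real_def dist_commute)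
  qed simp
qed

lemma closed_arclength_curve_times_outside_ball:
  assumes "arclength_curve \<gamma> l"
  shows "closed {t \<in> {0..l}. a \<le> dist x (\<gamma> t)}"
proof -
  have "continuous_on {0..l} \<gamma>"
    using arclength_curve_lipschitz[OF assms] by (rule lipschitz_on_continuous_on)
  then show ?thesis
    by (intro continuous_on_closed_Collect_le continuous_intros) auto
qed

lemma arclength_curve_times_in_ball_sets:
  assumes "arclength_curve \<gamma> l"
  shows "{t \<in> {0..l}. \<gamma> t \<in> ball x a} \<in> sets lborel"
proof -
  have "{t \<in> {0..l}. \<gamma> t \<in> ball x a} = {0..l} - {t \<in> {0..l}. a \<le> dist x (\<gamma> t)}"
    by auto
  then show ?thesis
    using closed_arclength_curve_times_outside_ball[OF assms] by auto
qed

definition ball_cutoff :: "'a::metric_space \<Rightarrow> real \<Rightarrow> real \<Rightarrow> 'a \<Rightarrow> real" where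
  "ball_cutoff x a b y = max 0 (min 1 ((a - dist x y) / b))"

lemma ball_cutoff_nonneg: "0 \<le> ball_cutoff x a b y"
  and ball_cutoff_le_one: "ball_cutoff x a b y \<le> 1"
  unfolding ball_cutoff_def by auto

lemma ball_cutoff_eq_one: "0 < b \<Longrightarrow> dist x y \<le> a - b \<Longrightarrow> ball_cutoff x a b y = 1"
  unfolding ball_cutoff_def by (simp add: le_divide_eq)

lemma ball_cutoff_eq_zero: "0 < b \<Longrightarrow> y \<notin> ball x a \<Longrightarrow> ball_cutoff x a b y = 0"
  unfolding ball_cutoff_def by (simp add: divide_nonpos_pos)

lemma ball_cutoff_lipschitz:
  assumes "0 < b"
  shows "(1 / b)-lipschitz_on U (ball_cutoff x a b)"
proof (rule lipschitz_onI)
  fix y z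
  have "dist (ball_cutoff x a b y) (ball_cutoff x a b z) \<le> \<bar>(a - dist x y) / b - (a - dist x z) / b\<bar>"
    unfolding ball_cutoff_def dist_real_def by (auto simp: max_def min_def)
  also have "\<dots> = \<bar>dist x z - dist x y\<bar> / b"
    using assms by (simp add: diff_divide_distrib[symmetric])
  also have "\<dots> \<le> 1 / b * dist y z"
    using assms abs_dist_diff_le[of z x y] by (simp add: divide_right_mono dist_commute)
  finally show "dist (ball_cutoff x a b y) (ball_cutoff x a b z) \<le> 1 / b * dist y z" .
qed (use assms in simp)

lemma ball_cutoff_borel_measurable [measurable]: "ball_cutoff x a b \<in> borel_measurable borel"
proof (rule borel_measurable_continuous_onI)
  show "continuous_on UNIV (ball_cutoff x a b)"
    unfolding ball_cutoff_def[abs_def] divide_inverse by (intro continuous_intros)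
qed

lemma ball_cutoff_arclength_curve_diff_le:
  assumes \<gamma>: "arclength_curve \<gamma> l" and "0 < b"
  shows "\<bar>ball_cutoff x a b (\<gamma> 0) - ball_cutoff x a b (\<gamma> l)\<bar>
    \<le> 1 / b * measure lborel {t \<in> {0..l}. \<gamma> t \<in> ball x a}"
proof -
  define T where "T = {t \<in> {0..l}. a \<le> dist x (\<gamma> t)}"
  have "(1 / b * 1)-lipschitz_on {0..l} (\<lambda>t. ball_cutoff x a b (\<gamma> t))"
    using arclength_curve_lipschitz[OF \<gamma>] ball_cutoff_lipschitz[OF \<open>0 < b\<close>]
    by (rule lipschitz_on_compose2)
  moreover have "0 \<le> l" using \<gamma> unfolding arclength_curve_def by simp
  moreover have "closed T" unfolding T_def using \<gamma> by (rule closed_arclength_curve_times_outside_ball)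
  moreover have "ball_cutoff x a b (\<gamma> t) = 0" if "t \<in> T" for t
    using that \<open>0 < b\<close> unfolding T_def by (intro ball_cutoff_eq_zero) auto
  ultimately have "dist (ball_cutoff x a b (\<gamma> 0)) (ball_cutoff x a b (\<gamma> l)) \<le> 1 / b * measure lborel ({0..l} - T)"
    by (intro lipschitz_dist_le_measure_outside_level_set) (auto simp: T_def)
  moreover have "{0..l} - T = {t \<in> {0..l}. \<gamma> t \<in> ball x a}" unfolding T_def by auto
  ultimately show ?thesis by (simp add: dist_real_def)
qed

lemma line_integral_sum_indicator_balls:
  assumes \<gamma>: "arclength_curve \<gamma> l" and c: "\<And>k. k < n \<Longrightarrow> 0 \<le> c k"
  shows "line_integral (\<lambda>y. ennreal (\<Sum>k<n. c k * indicator (ball x (a k)) y)) \<gamma> l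
    = ennreal (\<Sum>k<n. c k * measure lborel {t \<in> {0..l}. \<gamma> t \<in> ball x (a k)})"
proof -
  define S where "S k = {t \<in> {0..l}. \<gamma> t \<in> ball x (a k)}" for k
  have S: "S k \<in> sets lborel" for k unfolding S_def using \<gamma> by (rule arclength_curve_times_in_ball_sets)
  have S_finite: "emeasure lborel (S k) = ennreal (measure lborel (S k))" for k
  proof (rule emeasure_eq_ennreal_measure)
    have "emeasure lborel (S k) \<le> emeasure lborel {0..l}" by (rule emeasure_mono) (auto simp: S_def)
    then show "emeasure lborel (S k) \<noteq> top" by (auto simp: emeasure_lborel_Icc_eq top_unique)
  qed
  have integrand: "ennreal (\<Sum>k<n. c k * indicator (ball x (a k)) (\<gamma> t)) * indicator {0..l} t
      = (\<Sum>k<n. ennreal (c k) * indicator (S k) t)" for t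
  proof (cases "t \<in> {0..l}")
    case True
    have "ennreal (\<Sum>k<n. c k * indicator (ball x (a k)) (\<gamma> t)) = (\<Sum>k<n. ennreal (c k * indicator (S k) t))"
      using True c by (subst sum_ennreal) (auto simp: S_def indicator_def)
    also have "\<dots> = (\<Sum>k<n. ennreal (c k) * indicator (S k) t)"
      by (intro sum.cong) (auto simp: indicator_def)
    finally show ?thesis using True by simp
  qed (auto simp: S_def indicator_def)
  have "line_integral (\<lambda>y. ennreal (\<Sum>k<n. c k * indicator (ball x (a k)) y)) \<gamma> l
      = (\<Sum>k<n. ennreal (c k) * emeasure lborel (S k))"
    unfolding line_integral_def integrand using S
    by (simp add: nn_integral_sum nn_integral_cmult_indicator)
  also have "\<dots> = ennreal (\<Sum>k<n. c k * measure lborel (S k))"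
    using c by (subst sum_ennreal[symmetric]) (auto simp: S_finite ennreal_mult)
  finally show ?thesis unfolding S_def .
qed

lemma cutoff_sum_upper_gradient:
  assumes \<gamma>: "arclength_curve \<gamma> l" and radii: "\<And>k. k < n \<Longrightarrow> 0 < b k \<and> 0 \<le> w k"
  shows "ennreal \<bar>(\<Sum>k<n. w k * ball_cutoff x (a k) (b k) (\<gamma> 0))
      - (\<Sum>k<n. w k * ball_cutoff x (a k) (b k) (\<gamma> l))\<bar>
    \<le> line_integral (\<lambda>y. ennreal (\<Sum>k<n. w k / b k * indicator (ball x (a k)) y)) \<gamma> l"
proof -
  define m where "m k = measure lborel {t \<in> {0..l}. \<gamma> t \<in> ball x (a k)}" for k
  have "\<bar>(\<Sum>k<n. w k * ball_cutoff x (a k) (b k) (\<gamma> 0)) - (\<Sum>k<n. w k * ball_cutoff x (a k) (b k) (\<gamma> l))\<bar>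
      = \<bar>\<Sum>k<n. w k * (ball_cutoff x (a k) (b k) (\<gamma> 0) - ball_cutoff x (a k) (b k) (\<gamma> l))\<bar>"
    by (simp add: sum_subtractf right_diff_distrib)
  also have "\<dots> \<le> (\<Sum>k<n. w k * \<bar>ball_cutoff x (a k) (b k) (\<gamma> 0) - ball_cutoff x (a k) (b k) (\<gamma> l)\<bar>)"
    using radii by (intro order_trans[OF sum_abs] sum_mono) (simp add: abs_mult)
  also have "\<dots> \<le> (\<Sum>k<n. w k * (1 / b k * m k))"
    using radii ball_cutoff_arclength_curve_diff_le[OF \<gamma>] unfolding m_def
    by (intro sum_mono mult_left_mono) auto
  finally have "\<bar>(\<Sum>k<n. w k * ball_cutoff x (a k) (b k) (\<gamma> 0)) - (\<Sum>k<n. w k * ball_cutoff x (a k) (b k) (\<gamma> l))\<bar>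
      \<le> (\<Sum>k<n. w k / b k * m k)" by simp
  moreover have "line_integral (\<lambda>y. ennreal (\<Sum>k<n. w k / b k * indicator (ball x (a k)) y)) \<gamma> l
      = ennreal (\<Sum>k<n. w k / b k * m k)"
    unfolding m_def using radii by (intro line_integral_sum_indicator_balls[OF \<gamma>]) (auto intro: divide_nonneg_pos)
  ultimately show ?thesis by (simp add: ennreal_leI)
qed

lemma modulus_empty: "modulus \<mu> p {} = 0"
proof -
  have "modulus \<mu> p {} \<le> (\<integral>\<^sup>+ y. epow 0 p \<partial>\<mu>)"
    unfolding modulus_def by (rule INF_lower) auto
  then show ?thesis by (simp add: epow_def)
qed

lemma upper_gradient_imp_p_weak_upper_gradient:
  assumes "g \<in> borel_measurable borel"
    and "\<And>\<gamma> l. arclength_curve \<gamma> l \<Longrightarrow> ennreal \<bar>u (\<gamma> 0) - u (\<gamma> l)\<bar> \<le> line_integral g \<gamma> l"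
  shows "p_weak_upper_gradient \<mu> p u g"
proof -
  have no_exceptional_curves:
    "{(\<gamma>, l). arclength_curve \<gamma> l \<and> \<not> ennreal \<bar>u (\<gamma> 0) - u (\<gamma> l)\<bar> \<le> line_integral g \<gamma> l} = {}"
    using assms(2) by auto
  show ?thesis
    unfolding p_weak_upper_gradient_def no_exceptional_curves modulus_empty using assms(1) by simp
qed

lemma cap_le_energy:
  assumes "newtonian \<mu> p u" "\<And>y. y \<notin> \<Omega> \<Longrightarrow> u y = 0" "\<And>y. y \<in> E \<Longrightarrow> 1 \<le> u y"
    and "p_weak_upper_gradient \<mu> p u g"
  shows "cap \<mu> p E \<Omega> \<le> (\<integral>\<^sup>+ y. epow (g y) p \<partial>\<mu>)"
proof -
  have "cap \<mu> p E \<Omega> \<le> (\<integral>\<^sup>+ y. epow (g y) p * indicator \<Omega> y \<partial>\<mu>)"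
    unfolding cap_def using assms by (intro INF_lower2[where i="(u, g)"]) auto
  also have "\<dots> \<le> (\<integral>\<^sup>+ y. epow (g y) p \<partial>\<mu>)"
    by (intro nn_integral_mono) (simp add: indicator_def)
  finally show ?thesis .
qed

lemma sets_ball_mms:
  assumes "mms \<mu>"
  shows "ball x s \<in> sets \<mu>"
  using assms unfolding mms_def by auto

lemma emeasure_ball_less_top:
  assumes "mms \<mu>"
  shows "emeasure \<mu> (ball x s) < \<infinity>"
  using assms unfolding mms_def by (cases "0 < s") (auto simp: ball_empty)

lemma emeasure_ball_eq_measure:
  assumes "mms \<mu>"
  shows "emeasure \<mu> (ball x s) = ennreal (measure \<mu> (ball x s))"
  using emeasure_ball_less_top[OF assms, of x s] by (intro emeasure_eq_ennreal_measure) auto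

lemma measure_ball_mono:
  assumes "mms \<mu>" and "s \<le> s'"
  shows "measure \<mu> (ball x s) \<le> measure \<mu> (ball x s')"
proof (rule measure_mono_fmeasurable)
  show "ball x s' \<in> fmeasurable \<mu>"
    using emeasure_ball_less_top[OF assms(1)] sets_ball_mms[OF assms(1)] by (auto simp: fmeasurable_def)
qed (use assms sets_ball_mms in auto)

lemma nn_integral_sum_indicator_balls:
  assumes "mms \<mu>" and "\<And>j. j < n \<Longrightarrow> 0 \<le> d j"
  shows "(\<integral>\<^sup>+ y. ennreal (\<Sum>j<n. d j * indicator (ball x (a j)) y) \<partial>\<mu>)
    = ennreal (\<Sum>j<n. d j * measure \<mu> (ball x (a j)))"
proof -
  have "(\<integral>\<^sup>+ y. ennreal (\<Sum>j<n. d j * indicator (ball x (a j)) y) \<partial>\<mu>)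
      = (\<integral>\<^sup>+ y. (\<Sum>j<n. ennreal (d j) * indicator (ball x (a j)) y) \<partial>\<mu>)"
    using assms(2) by (intro nn_integral_cong, subst sum_ennreal[symmetric])
      (auto intro!: sum.cong simp: ennreal_mult ennreal_indicator)
  also have "\<dots> = (\<Sum>j<n. ennreal (d j) * emeasure \<mu> (ball x (a j)))"
  proof -
    have [measurable]: "ball x s \<in> sets \<mu>" for s using assms(1) by (rule sets_ball_mms)
    have "(\<integral>\<^sup>+ y. (\<Sum>j<n. ennreal (d j) * indicator (ball x (a j)) y) \<partial>\<mu>)
        = (\<Sum>j<n. \<integral>\<^sup>+ y. ennreal (d j) * indicator (ball x (a j)) y \<partial>\<mu>)"
      by (rule nn_integral_sum) measurable
    then show ?thesis by (simp add: nn_integral_cmult_indicator)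
  qed
  also have "\<dots> = ennreal (\<Sum>j<n. d j * measure \<mu> (ball x (a j)))"
    using assms by (subst sum_ennreal[symmetric]) (auto simp: emeasure_ball_eq_measure ennreal_mult)
  finally show ?thesis .
qed

lemma newtonian_if_supported_in_ball:
  assumes mms: "mms \<mu>" and "0 \<le> p"
    and u: "u \<in> borel_measurable borel" "\<And>y. \<bar>u y\<bar> \<le> M"
    and g: "p_weak_upper_gradient \<mu> p u g" "\<And>y. g y \<le> ennreal N"
    and support: "\<And>y. y \<notin> ball x R \<Longrightarrow> u y = 0 \<and> g y = 0"
  shows "newtonian \<mu> p u"
proof -
  have finite_on_ball: "(\<integral>\<^sup>+ y. f y \<partial>\<mu>) < \<infinity>"
    if "\<And>y. f y \<le> ennreal C * indicator (ball x R) y" for f C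
  proof -
    have "(\<integral>\<^sup>+ y. f y \<partial>\<mu>) \<le> (\<integral>\<^sup>+ y. ennreal C * indicator (ball x R) y \<partial>\<mu>)"
      using that by (rule nn_integral_mono)
    also have "\<dots> = ennreal C * emeasure \<mu> (ball x R)"
      using mms by (intro nn_integral_cmult_indicator sets_ball_mms)
    also have "\<dots> < \<infinity>"
      using emeasure_ball_less_top[OF mms] by (simp add: ennreal_mult_less_top)
    finally show ?thesis .
  qed
  have u_bound: "ennreal (\<bar>u y\<bar> powr p) \<le> ennreal (M powr p) * indicator (ball x R) y" for y
    using support[of y] u(2)[of y] \<open>0 \<le> p\<close>
    by (cases "y \<in> ball x R") (auto intro!: ennreal_leI powr_mono2)
  have g_bound: "epow (g y) p \<le> ennreal (N powr p) * indicator (ball x R) y" for y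
  proof (cases "y \<in> ball x R \<and> g y \<noteq> 0")
    case True
    have "g y \<noteq> top" using g(2)[of y] by (auto simp: top_unique)
    then have "enn2real (g y) \<le> N"
      using True g(2)[of y] by (cases "g y") (auto simp: ennreal_le_iff2 split: if_splits)
    then show ?thesis
      using True \<open>g y \<noteq> top\<close> \<open>0 \<le> p\<close> by (auto simp: epow_def intro!: ennreal_leI powr_mono2)
  next
    case False
    then have "g y = 0" using support by blast
    then show ?thesis by (simp add: epow_def)
  qed
  have "u \<in> borel_measurable \<mu>"
    by (rule borel_measurable_subalgebra[OF _ _ u(1)]) (use mms in \<open>auto simp: mms_def\<close>)
  moreover have "(\<integral>\<^sup>+ y. ennreal (\<bar>u y\<bar> powr p) \<partial>\<mu>) < \<infinity>"
    using u_bound by (rule finite_on_ball)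
  moreover have "(\<integral>\<^sup>+ y. epow (g y) p \<partial>\<mu>) < \<infinity>"
    using g_bound by (rule finite_on_ball)
  ultimately show ?thesis
    unfolding newtonian_def using g(1) by blast
qed

lemma cap_le_cutoff_sum:
  fixes \<mu> :: "'a::metric_space measure"
  assumes mms: "mms \<mu>" and "0 \<le> p" and weights: "(\<Sum>k<n. w k) = 1"
    and radii: "\<And>k. k < n \<Longrightarrow> 0 < b k \<and> 0 \<le> w k \<and> r \<le> a k - b k \<and> a k \<le> R"
  shows "cap \<mu> p (ball x r) (ball x R)
    \<le> (\<integral>\<^sup>+ y. ennreal ((\<Sum>k<n. w k / b k * indicator (ball x (a k)) y) powr p) \<partial>\<mu>)"
proof -
  define u where "u y = (\<Sum>k<n. w k * ball_cutoff x (a k) (b k) y)" for y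
  define G where "G y = (\<Sum>k<n. w k / b k * indicator (ball x (a k)) y)" for y
  have G_nonneg: "0 \<le> G y" for y
    unfolding G_def using radii by (auto intro!: sum_nonneg divide_nonneg_pos)
  have [measurable]: "ball x s \<in> sets borel" for s by simp
  have "(\<lambda>y. ennreal (G y)) \<in> borel_measurable borel"
    unfolding G_def by measurable
  moreover have "ennreal \<bar>u (\<gamma> 0) - u (\<gamma> l)\<bar> \<le> line_integral (\<lambda>y. ennreal (G y)) \<gamma> l"
    if "arclength_curve \<gamma> l" for \<gamma> l
    unfolding u_def G_def using radii by (intro cutoff_sum_upper_gradient[OF that]) auto
  ultimately have weak_gradient: "p_weak_upper_gradient \<mu> p u (\<lambda>y. ennreal (G y))"
    by (rule upper_gradient_imp_p_weak_upper_gradient)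
  have outside: "y \<notin> ball x (a k)" if "y \<notin> ball x R" "k < n" for y k
    using radii[OF \<open>k < n\<close>] \<open>y \<notin> ball x R\<close> by auto
  have u_off: "u y = 0" if "y \<notin> ball x R" for y
    unfolding u_def using radii outside[OF that] by (simp add: ball_cutoff_eq_zero)
  have u_on: "u y = 1" if "y \<in> ball x r" for y
  proof -
    have "ball_cutoff x (a k) (b k) y = 1" if "k < n" for k
      using radii[OF that] \<open>y \<in> ball x r\<close> by (intro ball_cutoff_eq_one) auto
    then show ?thesis unfolding u_def using weights by simp
  qed
  have "\<bar>u y\<bar> \<le> 1" for y
  proof -
    have "0 \<le> u y" unfolding u_def using radii by (auto intro!: sum_nonneg simp: ball_cutoff_nonneg)
    moreover have "u y \<le> (\<Sum>k<n. w k * 1)"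
      unfolding u_def using radii by (intro sum_mono mult_left_mono) (auto simp: ball_cutoff_le_one)
    ultimately show ?thesis using weights by simp
  qed
  moreover have "u \<in> borel_measurable borel" unfolding u_def by measurable
  moreover have "ennreal (G y) \<le> ennreal (\<Sum>k<n. w k / b k)" for y
    unfolding G_def using radii by (intro ennreal_leI sum_mono) (auto simp: indicator_def intro: divide_nonneg_pos)
  moreover have "G y = 0" if "y \<notin> ball x R" for y
    unfolding G_def using outside[OF that] by simp
  ultimately have "newtonian \<mu> p u"
    using u_off by (intro newtonian_if_supported_in_ball[OF mms \<open>0 \<le> p\<close> _ _ weak_gradient]) auto
  then have "cap \<mu> p (ball x r) (ball x R) \<le> (\<integral>\<^sup>+ y. epow (ennreal (G y)) p \<partial>\<mu>)"
    using u_off u_on weak_gradient by (intro cap_le_energy) auto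
  also have "\<dots> = (\<integral>\<^sup>+ y. ennreal (G y powr p) \<partial>\<mu>)"
    using G_nonneg by (simp add: epow_def)
  finally show ?thesis unfolding G_def .
qed

lemma cap_le_single_cutoff:
  fixes \<mu> :: "'a::metric_space measure"
  assumes mms: "mms \<mu>" and "0 \<le> p" and "0 < b" "r \<le> a - b" "a \<le> R"
  shows "cap \<mu> p (ball x r) (ball x R) \<le> ennreal ((1 / b) powr p * measure \<mu> (ball x a))"
proof -
  have "cap \<mu> p (ball x r) (ball x R)
      \<le> (\<integral>\<^sup>+ y. ennreal ((\<Sum>k<Suc 0. 1 / b * indicator (ball x a) y) powr p) \<partial>\<mu>)"
    using assms by (intro cap_le_cutoff_sum[where w="\<lambda>_. 1" and b="\<lambda>_. b" and a="\<lambda>_. a"]) auto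
  also have "\<dots> = (\<integral>\<^sup>+ y. ennreal ((1 / b) powr p) * indicator (ball x a) y \<partial>\<mu>)"
    by (intro nn_integral_cong) (simp add: indicator_def)
  also have "\<dots> = ennreal ((1 / b) powr p * measure \<mu> (ball x a))"
    using mms by (simp add: nn_integral_cmult_indicator sets_ball_mms emeasure_ball_eq_measure ennreal_mult)
  finally show ?thesis .
qed

lemma sum_power_half_atLeastLessThan:
  "j \<le> n \<Longrightarrow> (\<Sum>k\<in>{j..<n}. (1 / 2) ^ k :: real) = 2 * (1 / 2) ^ j - 2 * (1 / 2) ^ n"
  by (induction n rule: dec_induct) simp_all

lemma geometric_indicator_sum_powr_le:
  fixes A :: "nat \<Rightarrow> 'a set" and c p :: real
  assumes "mono A" and "0 \<le> c" "0 \<le> p"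
  shows "(\<Sum>k<n. c / 2 ^ k * indicator (A k) y) powr p \<le> (\<Sum>j<n. (2 * c / 2 ^ j) powr p * indicator (A j) y)"
proof (cases "\<exists>k<n. y \<in> A k")
  case False
  then have "(\<Sum>k<n. c / 2 ^ k * indicator (A k) y) = 0" by simp
  then show ?thesis by (simp add: sum_nonneg)
next
  case True
  define j where "j = (LEAST k. k < n \<and> y \<in> A k)"
  have j: "j < n" "y \<in> A j"
    unfolding j_def using LeastI_ex[OF True] by auto
  have "y \<notin> A k" if "k < j" for k
    using not_less_Least[OF that[unfolded j_def]] that j by auto
  moreover have "y \<in> A k" if "j \<le> k" for k
    using monoD[OF \<open>mono A\<close> that] j by auto
  ultimately have "(\<Sum>k<n. c / 2 ^ k * indicator (A k) y) = (\<Sum>k\<in>{j..<n}. c / 2 ^ k)"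
    using j by (intro sum.mono_neutral_cong_right) auto
  also have "\<dots> = c * (\<Sum>k\<in>{j..<n}. (1 / 2) ^ k)"
    by (simp add: sum_distrib_left power_one_over)
  also have "\<dots> = c * (2 * (1 / 2) ^ j - 2 * (1 / 2) ^ n)"
    using j by (subst sum_power_half_atLeastLessThan) auto
  also have "\<dots> \<le> c * (2 * (1 / 2) ^ j)"
    using \<open>0 \<le> c\<close> by (intro mult_left_mono) auto
  also have "\<dots> = 2 * c / 2 ^ j"
    by (simp add: power_one_over)
  finally have "(\<Sum>k<n. c / 2 ^ k * indicator (A k) y) powr p \<le> (2 * c / 2 ^ j) powr p"
    using assms by (intro powr_mono2) (auto intro!: sum_nonneg)
  also have "\<dots> = (2 * c / 2 ^ j) powr p * indicator (A j) y"
    using j by simp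
  also have "\<dots> \<le> (\<Sum>j<n. (2 * c / 2 ^ j) powr p * indicator (A j) y)"
    using j by (intro member_le_sum) auto
  finally show ?thesis .
qed

lemma cap_le_dyadic_cutoffs:
  fixes \<mu> :: "'a::metric_space measure"
  assumes mms: "mms \<mu>" and "0 \<le> p" and "1 \<le> n" and "0 < r" and "2 ^ n * r \<le> R"
  shows "cap \<mu> p (ball x r) (ball x R)
    \<le> ennreal (\<Sum>j<n. (2 / (real n * 2 ^ j * r)) powr p * measure \<mu> (ball x (2 ^ Suc j * r)))"
proof -
  define c where "c = 1 / (real n * r)"
  define A where "A j = ball x (2 ^ Suc j * r)" for j
  have "mono A"
    unfolding A_def using \<open>0 < r\<close> by (intro monoI subset_ball mult_right_mono power_increasing) auto
  have radii: "r \<le> 2 ^ Suc k * r - 2 ^ k * r \<and> 2 ^ Suc k * r \<le> R" if "k < n" for k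
  proof -
    have "(2::real) ^ Suc k * r \<le> 2 ^ n * r"
      using that \<open>0 < r\<close> by (intro mult_right_mono power_increasing) auto
    moreover have "r \<le> 2 ^ k * r"
      using \<open>0 < r\<close> by simp
    moreover have "2 ^ Suc k * r - 2 ^ k * r = (2::real) ^ k * r"
      by simp
    ultimately show ?thesis using \<open>2 ^ n * r \<le> R\<close> by linarith
  qed
  have "cap \<mu> p (ball x r) (ball x R)
      \<le> (\<integral>\<^sup>+ y. ennreal ((\<Sum>k<n. (1 / real n) / (2 ^ k * r) * indicator (A k) y) powr p) \<partial>\<mu>)"
    unfolding A_def using assms radii
    by (intro cap_le_cutoff_sum[where w="\<lambda>_. 1 / real n" and b="\<lambda>k. 2 ^ k * r"]) auto
  also have "\<dots> \<le> (\<integral>\<^sup>+ y. ennreal (\<Sum>j<n. (2 * c / 2 ^ j) powr p * indicator (A j) y) \<partial>\<mu>)"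
    using geometric_indicator_sum_powr_le[OF \<open>mono A\<close>, of c p] \<open>0 < r\<close> \<open>0 \<le> p\<close>
    by (intro nn_integral_mono ennreal_leI) (simp add: c_def field_simps)
  also have "\<dots> = ennreal (\<Sum>j<n. (2 * c / 2 ^ j) powr p * measure \<mu> (A j))"
    unfolding A_def using mms by (intro nn_integral_sum_indicator_balls) auto
  also have "\<dots> = ennreal (\<Sum>j<n. (2 / (real n * 2 ^ j * r)) powr p * measure \<mu> (ball x (2 ^ Suc j * r)))"
    by (simp add: A_def c_def field_simps)
  finally show ?thesis .
qed

lemma cap_ball_le_outer_growth:
  fixes \<mu> :: "'a::metric_space measure"
  assumes mms: "mms \<mu>" and "0 \<le> p" and "0 < r" "2 * r \<le> R"
    and growth: "measure \<mu> (ball x R) \<le> K * R powr q"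
  shows "cap \<mu> p (ball x r) (ball x R) \<le> ennreal (2 powr p * K * R powr (q - p))"
proof -
  have "cap \<mu> p (ball x r) (ball x R) \<le> ennreal ((1 / (R - r)) powr p * measure \<mu> (ball x R))"
    using assms by (intro cap_le_single_cutoff) auto
  also have "\<dots> \<le> ennreal ((2 / R) powr p * (K * R powr q))"
  proof (intro ennreal_leI mult_mono)
    show "(1 / (R - r)) powr p \<le> (2 / R) powr p"
      using assms by (intro powr_mono2) (auto simp: field_simps)
  qed (use growth in auto)
  also have "(2 / R) powr p * (K * R powr q) = 2 powr p * K * R powr (q - p)"
    using assms by (simp add: powr_divide powr_diff field_simps)
  finally show ?thesis .
qed

lemma cap_ball_le_inner_growth:
  fixes \<mu> :: "'a::metric_space measure"
  assumes mms: "mms \<mu>" and "0 \<le> p" and "0 < r" "2 * r \<le> R"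
    and growth: "measure \<mu> (ball x (2 * r)) \<le> K * (2 * r) powr q"
  shows "cap \<mu> p (ball x r) (ball x R) \<le> ennreal (2 powr q * K * r powr (q - p))"
proof -
  have "cap \<mu> p (ball x r) (ball x R) \<le> ennreal ((1 / r) powr p * measure \<mu> (ball x (2 * r)))"
    using assms by (intro cap_le_single_cutoff) auto
  also have "\<dots> \<le> ennreal ((1 / r) powr p * (K * (2 * r) powr q))"
    using growth by (intro ennreal_leI mult_left_mono) auto
  also have "(1 / r) powr p * (K * (2 * r) powr q) = 2 powr q * K * r powr (q - p)"
    using assms by (simp add: powr_divide powr_diff powr_mult field_simps)
  finally show ?thesis .
qed

lemma dyadic_scale_count:
  fixes t :: real
  assumes "2 \<le> t"
  obtains n :: nat where "1 \<le> n" "2 ^ n \<le> t" "ln t \<le> 2 * real n"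
proof
  define L where "L = log 2 t"
  have "1 \<le> L" unfolding L_def using assms by (subst le_log_iff) auto
  define n where "n = nat \<lfloor>L\<rfloor>"
  have n: "real n \<le> L" "L < real n + 1" "1 \<le> n"
    unfolding n_def using \<open>1 \<le> L\<close> by linarith+
  show "1 \<le> n" by (fact n(3))
  have "(2::real) ^ n = 2 powr real n" by (simp add: powr_realpow)
  also have "\<dots> \<le> 2 powr L" using n by (intro powr_mono) auto
  also have "\<dots> = t" unfolding L_def using assms by simp
  finally show "2 ^ n \<le> t" .
  have "ln t = L * ln 2" unfolding L_def log_def by simp
  also have "\<dots> \<le> L" using \<open>1 \<le> L\<close> ln_2_less_1 by (intro mult_left_le) auto
  finally show "ln t \<le> 2 * real n" using n by linarith
qed

lemma cap_ball_le_log_growth: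
  fixes \<mu> :: "'a::metric_space measure"
  assumes mms: "mms \<mu>" and "1 \<le> p" and "0 < r" "2 * r \<le> R"
    and growth: "\<And>s. r < s \<Longrightarrow> s \<le> R \<Longrightarrow> measure \<mu> (ball x s) \<le> K * s powr p"
  shows "cap \<mu> p (ball x r) (ball x R) \<le> ennreal (K * 4 powr p * 2 powr (p - 1) * ln (R / r) powr (1 - p))"
proof -
  have "0 \<le> K * R powr p"
    using growth[of R] assms measure_nonneg[of \<mu> "ball x R"] by linarith
  then have "0 \<le> K"
    using assms by (simp add: zero_le_mult_iff)
  have "2 \<le> R / r" using assms by (simp add: field_simps)
  then obtain n where n: "1 \<le> n" "2 ^ n \<le> R / r" "ln (R / r) \<le> 2 * real n"
    by (rule dyadic_scale_count)
  have term_bound: "(2 / (real n * 2 ^ j * r)) powr p * measure \<mu> (ball x (2 ^ Suc j * r))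
      \<le> K * (4 / real n) powr p" if "j < n" for j
  proof -
    have "(2::real) ^ Suc j * r \<le> 2 ^ n * r"
      using that \<open>0 < r\<close> by (intro mult_right_mono power_increasing) auto
    also have "\<dots> \<le> R"
      using n(2) \<open>0 < r\<close> by (simp add: field_simps)
    finally have "2 ^ Suc j * r \<le> R" .
    moreover have "r < 2 ^ Suc j * r"
      using \<open>0 < r\<close> one_less_power[of "2::real" "Suc j"] by simp
    ultimately have "(2 / (real n * 2 ^ j * r)) powr p * measure \<mu> (ball x (2 ^ Suc j * r))
        \<le> (2 / (real n * 2 ^ j * r)) powr p * (K * (2 ^ Suc j * r) powr p)"
      using growth by (intro mult_left_mono) auto
    also have "\<dots> = K * ((2 / (real n * 2 ^ j * r)) * (2 ^ Suc j * r)) powr p"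
      by (simp add: powr_mult[symmetric])
    also have "(2 / (real n * 2 ^ j * r)) * (2 ^ Suc j * r) = 4 / real n"
      using \<open>0 < r\<close> by (simp add: field_simps)
    finally show ?thesis .
  qed
  have "(\<Sum>j<n. (2 / (real n * 2 ^ j * r)) powr p * measure \<mu> (ball x (2 ^ Suc j * r)))
      \<le> (\<Sum>j<n. K * (4 / real n) powr p)"
    using term_bound by (intro sum_mono) auto
  also have "\<dots> = K * 4 powr p * real n powr (1 - p)"
    using n(1) by (simp add: powr_divide powr_diff field_simps)
  also have "\<dots> \<le> K * 4 powr p * (ln (R / r) / 2) powr (1 - p)"
    using n \<open>2 \<le> R / r\<close> \<open>1 \<le> p\<close> \<open>0 \<le> K\<close> by (intro mult_left_mono powr_mono2') auto
  also have "\<dots> = K * 4 powr p * 2 powr (p - 1) * ln (R / r) powr (1 - p)"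
    using \<open>2 \<le> R / r\<close> by (simp add: powr_divide powr_diff field_simps)
  finally have "(\<Sum>j<n. (2 / (real n * 2 ^ j * r)) powr p * measure \<mu> (ball x (2 ^ Suc j * r)))
      \<le> K * 4 powr p * 2 powr (p - 1) * ln (R / r) powr (1 - p)" .
  moreover have "cap \<mu> p (ball x r) (ball x R)
      \<le> ennreal (\<Sum>j<n. (2 / (real n * 2 ^ j * r)) powr p * measure \<mu> (ball x (2 ^ Suc j * r)))"
    using assms n by (intro cap_le_dyadic_cutoffs) (auto simp: field_simps)
  ultimately show ?thesis
    using ennreal_leI order_trans by blast
qed

lemma lower_S0_growth_up_to:
  assumes mms: "mms \<mu>" and q: "q \<in> lower_S0 \<mu> x" and "0 < R\<^sub>0"
  shows "\<exists>K. \<forall>s\<in>{0<..R\<^sub>0}. measure \<mu> (ball x s) \<le> K * s powr q"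
proof -
  obtain C where C: "\<And>s. 0 < s \<Longrightarrow> s \<le> 1 \<Longrightarrow> measure \<mu> (ball x s) \<le> C * s powr q"
    using q unfolding lower_S0_def by auto
  have "0 < q" using q unfolding lower_S0_def by simp
  define K where "K = max 0 C + measure \<mu> (ball x R\<^sub>0)"
  have "measure \<mu> (ball x s) \<le> K * s powr q" if s: "0 < s" "s \<le> R\<^sub>0" for s
  proof (cases "s \<le> 1")
    case True
    have "measure \<mu> (ball x s) \<le> C * s powr q" using C s True by simp
    also have "\<dots> \<le> K * s powr q"
    proof (rule mult_right_mono)
      show "C \<le> K" unfolding K_def using measure_nonneg[of \<mu> "ball x R\<^sub>0"] by linarith
    qed simp
    finally show ?thesis .
  next
    case False
    have "measure \<mu> (ball x s) \<le> measure \<mu> (ball x R\<^sub>0)" using mms s(2) by (rule measure_ball_mono)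
    also have "\<dots> \<le> K * 1" unfolding K_def by simp
    also have "\<dots> \<le> K * s powr q"
      using False \<open>0 < q\<close> unfolding K_def by (intro mult_left_mono ge_one_powr_ge_zero) auto
    finally show ?thesis .
  qed
  then show ?thesis by (intro exI[of _ K]) auto
qed

lemma upper_Sinf_growth_from:
  assumes mms: "mms \<mu>" and q: "q \<in> upper_Sinf \<mu> x" and "0 < R\<^sub>0"
  shows "\<exists>K. \<forall>s\<in>{R\<^sub>0..}. measure \<mu> (ball x s) \<le> K * s powr q"
proof -
  obtain C where C: "\<And>s. 1 \<le> s \<Longrightarrow> measure \<mu> (ball x s) \<le> C * s powr q"
    using q unfolding upper_Sinf_def by auto
  have "0 < q" using q unfolding upper_Sinf_def by simp
  define M where "M = measure \<mu> (ball x 1) / R\<^sub>0 powr q"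
  define K where "K = max 0 C + M"
  have "0 \<le> M" unfolding M_def by simp
  have "measure \<mu> (ball x s) \<le> K * s powr q" if s: "R\<^sub>0 \<le> s" for s
  proof (cases "1 \<le> s")
    case True
    have "measure \<mu> (ball x s) \<le> C * s powr q" using C True by simp
    also have "\<dots> \<le> K * s powr q" unfolding K_def using \<open>0 \<le> M\<close> by (intro mult_right_mono) auto
    finally show ?thesis .
  next
    case False
    have "measure \<mu> (ball x s) \<le> measure \<mu> (ball x 1)" using mms False by (intro measure_ball_mono) auto
    also have "\<dots> = M * R\<^sub>0 powr q" unfolding M_def using \<open>0 < R\<^sub>0\<close> by simp
    also have "\<dots> \<le> M * s powr q"
      using s \<open>0 < R\<^sub>0\<close> \<open>0 < q\<close> \<open>0 \<le> M\<close> by (intro mult_left_mono powr_mono2) auto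
    also have "\<dots> \<le> K * s powr q" unfolding K_def by (intro mult_right_mono) auto
    finally show ?thesis .
  qed
  then show ?thesis by (intro exI[of _ K]) auto
qed

lemma cap_ball_estimates_from_growth:
  fixes \<mu> :: "'a::metric_space measure" and P :: "real \<Rightarrow> real \<Rightarrow> bool"
  assumes mms: "mms \<mu>" and "1 \<le> p"
    and growth: "\<exists>K. \<forall>s\<in>D. measure \<mu> (ball x s) \<le> K * s powr q"
    and region: "\<forall>r R. P r R \<longrightarrow> 0 < r \<and> 2 * r \<le> R \<and> {r<..R} \<subseteq> D"
  shows "\<exists>C. \<forall>r R. P r R \<longrightarrow> cap \<mu> p (ball x r) (ball x R) \<le> ennreal (C * R powr (q - p))"
    and "\<exists>C. \<forall>r R. P r R \<longrightarrow> cap \<mu> p (ball x r) (ball x R) \<le> ennreal (C * r powr (q - p))"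
    and "q = p \<Longrightarrow>
      \<exists>C. \<forall>r R. P r R \<longrightarrow> cap \<mu> p (ball x r) (ball x R) \<le> ennreal (C * ln (R / r) powr (1 - p))"
proof -
  obtain K where K: "\<And>s. s \<in> D \<Longrightarrow> measure \<mu> (ball x s) \<le> K * s powr q"
    using growth by blast
  have "0 \<le> p" using \<open>1 \<le> p\<close> by simp
  have radii: "0 < r" "2 * r \<le> R" if "P r R" for r R
    using region that by auto
  have growth_between: "measure \<mu> (ball x s) \<le> K * s powr q" if "P r R" "r < s" "s \<le> R" for r R s
  proof -
    have "{r<..R} \<subseteq> D" using region \<open>P r R\<close> by blast
    with that show ?thesis by (intro K) auto
  qed
  show "\<exists>C. \<forall>r R. P r R \<longrightarrow> cap \<mu> p (ball x r) (ball x R) \<le> ennreal (C * R powr (q - p))"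
  proof (intro exI allI impI)
    fix r R assume "P r R"
    with radii have "0 < r" "2 * r \<le> R" by auto
    then show "cap \<mu> p (ball x r) (ball x R) \<le> ennreal (2 powr p * K * R powr (q - p))"
      using growth_between[OF \<open>P r R\<close>, of R] by (intro cap_ball_le_outer_growth[OF mms \<open>0 \<le> p\<close>]) auto
  qed
  show "\<exists>C. \<forall>r R. P r R \<longrightarrow> cap \<mu> p (ball x r) (ball x R) \<le> ennreal (C * r powr (q - p))"
  proof (intro exI allI impI)
    fix r R assume "P r R"
    with radii have "0 < r" "2 * r \<le> R" by auto
    then show "cap \<mu> p (ball x r) (ball x R) \<le> ennreal (2 powr q * K * r powr (q - p))"
      using growth_between[OF \<open>P r R\<close>, of "2 * r"] by (intro cap_ball_le_inner_growth[OF mms \<open>0 \<le> p\<close>]) auto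
  qed
  show "\<exists>C. \<forall>r R. P r R \<longrightarrow> cap \<mu> p (ball x r) (ball x R) \<le> ennreal (C * ln (R / r) powr (1 - p))"
    if "q = p"
  proof (intro exI allI impI)
    fix r R assume "P r R"
    with radii have "0 < r" "2 * r \<le> R" by auto
    then show "cap \<mu> p (ball x r) (ball x R)
        \<le> ennreal (K * 4 powr p * 2 powr (p - 1) * ln (R / r) powr (1 - p))"
      using growth_between[OF \<open>P r R\<close>] \<open>q = p\<close> by (intro cap_ball_le_log_growth[OF mms \<open>1 \<le> p\<close>]) auto
  qed
qed

theorem proposition8p1:
  fixes \<mu> :: "'a::metric_space measure" and p R\<^sub>0 :: real and x :: 'a
  assumes "mms \<mu>" and "1 \<le> p" and "doubling_at \<mu> x" and "0 < R\<^sub>0"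
  shows
   "(\<forall>q. q \<in> lower_S0 \<mu> x \<longrightarrow>
      (q < p \<longrightarrow> (\<exists>C. \<forall>r R. 0 < 2 * r \<and> 2 * r \<le> R \<and> R \<le> R\<^sub>0 \<longrightarrow>
          cap \<mu> p (ball x r) (ball x R) \<le> ennreal (C * R powr (q - p)))) \<and>
      (p < q \<longrightarrow> (\<exists>C. \<forall>r R. 0 < 2 * r \<and> 2 * r \<le> R \<and> R \<le> R\<^sub>0 \<longrightarrow>
          cap \<mu> p (ball x r) (ball x R) \<le> ennreal (C * r powr (q - p))))) \<and>
    (\<not> bounded (UNIV :: 'a set) \<longrightarrow> (\<forall>q. q \<in> upper_Sinf \<mu> x \<longrightarrow>
      (q < p \<longrightarrow> (\<exists>C. \<forall>r R. R\<^sub>0 \<le> r \<and> r \<le> R / 2 \<longrightarrow>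
          cap \<mu> p (ball x r) (ball x R) \<le> ennreal (C * R powr (q - p)))) \<and>
      (p < q \<longrightarrow> (\<exists>C. \<forall>r R. R\<^sub>0 \<le> r \<and> r \<le> R / 2 \<longrightarrow>
          cap \<mu> p (ball x r) (ball x R) \<le> ennreal (C * r powr (q - p)))))) \<and>
    (p \<in> lower_S0 \<mu> x \<longrightarrow> (\<exists>C. \<forall>r R. 0 < 2 * r \<and> 2 * r \<le> R \<and> R \<le> R\<^sub>0 \<longrightarrow>
          cap \<mu> p (ball x r) (ball x R) \<le> ennreal (C * ln (R / r) powr (1 - p)))) \<and>
    (\<not> bounded (UNIV :: 'a set) \<longrightarrow> p \<in> upper_Sinf \<mu> x \<longrightarrow>
       (\<exists>C. \<forall>r R. R\<^sub>0 \<le> r \<and> r \<le> R / 2 \<longrightarrow>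
          cap \<mu> p (ball x r) (ball x R) \<le> ennreal (C * ln (R / r) powr (1 - p))))"
proof -
  note mms = \<open>mms \<mu>\<close> and p = \<open>1 \<le> p\<close>
  have small: "\<forall>r R. 0 < 2 * r \<and> 2 * r \<le> R \<and> R \<le> R\<^sub>0 \<longrightarrow>
      0 < r \<and> 2 * r \<le> R \<and> {r<..R} \<subseteq> {0<..R\<^sub>0}"
    by auto
  have large: "\<forall>r R. R\<^sub>0 \<le> r \<and> r \<le> R / 2 \<longrightarrow> 0 < r \<and> 2 * r \<le> R \<and> {r<..R} \<subseteq> {R\<^sub>0..}"
    using \<open>0 < R\<^sub>0\<close> by auto
  note lower = cap_ball_estimates_from_growth[OF mms p lower_S0_growth_up_to[OF mms _ \<open>0 < R\<^sub>0\<close>] small]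
  note upper = cap_ball_estimates_from_growth[OF mms p upper_Sinf_growth_from[OF mms _ \<open>0 < R\<^sub>0\<close>] large]
  show ?thesis
    by (intro conjI allI impI lower(1,2) upper(1,2) lower(3)[OF _ refl] upper(3)[OF _ refl])
qed

end
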